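(* Consider non-adaptive sensing $\bm{y} = \bm{A}\bm{x} + \bm{z}$, where $\bm{z} \sim \mathcal{N}(0, \bm{I}_{M\times M})$, $\bm{x}\in\mathbb{R}^N$ is an arbitrary one-sparse signal whose single nonzero entry equals $\mu>0$, and $\bm{A} = [A_1 \cdots A_N]$ is a real-valued $M \times N$ sensing matrix with $M = T\log_2(N)$ measurements, where $T \geq 1$ is a constant, whose columns satisfy $\|A_i\|_2 \leq \tau$ for all $i$. Let $\epsilon \in (0,1/2)$ be a target probability of error, and suppose $\tau = \Theta(Q^{-1}(\epsilon)/\mu)$. Then any such non-adaptive sensing matrix achieving probability of error at most $\epsilon$ in reconstructing $\bm{x}$ must have $l_0$ cost $\|\bm{A}\|_{0,0} = \Theta(N\log_2(N))$ as $N\to\infty$.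
   Context: The $l_0$ cost of $\bm{A}$ is $\|\bm{A}\|_{0,0} = \sum_{i=1}^N\sum_{j=1}^M \mathbb{I}(A(j,i)\neq 0)$, the number of nonzero entries. $Q(a) = \frac{1}{\sqrt{2\pi}}\int_a^\infty e^{-b^2/2}\,db$ is the Gaussian tail function and $Q^{-1}$ its inverse. A non-adaptive strategy acquires all measurements at once with a fixed matrix $\bm{A}$. Achieving probability of error $\epsilon$ means the support of $\bm{x}$ (equivalently $\bm{x}$) can be decided from $\bm{y}$ with error probability at most $\epsilon$; in particular, for each pair $i\neq j$ the pairwise error of distinguishing $\mu A_i$ from $\mu A_j$ in unit-variance Gaussian noise must be at most $\epsilon$. $F(N)=\Theta(g(N))$ means $C_1 g(N)\le F(N)\le C_2 g(N)$ for positive constants $C_1,C_2$ and all large $N$. *)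

theory Defs
  imports "HOL-Analysis.Analysis"
begin

definition Qfun :: "real \<Rightarrow> real" where
  "Qfun a = (LBINT b:{a..}. exp (- (b^2) / 2)) / sqrt (2 * pi)"

text \<open>Inverse of Q (Q is a bijection from the reals onto (0,1)).\<close>
definition Qinv :: "real \<Rightarrow> real" where
  "Qinv e = (THE a. Qfun a = e)"

text \<open>An M x N real matrix is a function A, entry A j i = A(j,i) (row j < M, column i < N).\<close>

definition col_norm :: "nat \<Rightarrow> (nat \<Rightarrow> nat \<Rightarrow> real) \<Rightarrow> nat \<Rightarrow> real" where
  "col_norm M A i = sqrt (\<Sum>j<M. (A j i)^2)"

definition col_dist :: "nat \<Rightarrow> (nat \<Rightarrow> nat \<Rightarrow> real) \<Rightarrow> nat \<Rightarrow> nat \<Rightarrow> real" where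
  "col_dist M A i k = sqrt (\<Sum>j<M. (A j i - A j k)^2)"

definition l0_cost :: "nat \<Rightarrow> nat \<Rightarrow> (nat \<Rightarrow> nat \<Rightarrow> real) \<Rightarrow> nat" where
  "l0_cost M N A = card {(j, i). j < M \<and> i < N \<and> A j i \<noteq> 0}"

text \<open>Minimal (ML, equal priors) error of distinguishing mu*A_i from mu*A_k in unit-variance
  Gaussian noise: Q(mu * ||A_i - A_k||_2 / 2).\<close>
definition pairwise_error :: "real \<Rightarrow> nat \<Rightarrow> (nat \<Rightarrow> nat \<Rightarrow> real) \<Rightarrow> nat \<Rightarrow> nat \<Rightarrow> real" where
  "pairwise_error \<mu> M A i k = Qfun (\<mu> * col_dist M A i k / 2)"

definition achieves_error :: "real \<Rightarrow> real \<Rightarrow> nat \<Rightarrow> nat \<Rightarrow> (nat \<Rightarrow> nat \<Rightarrow> real) \<Rightarrow> bool" where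
  "achieves_error \<epsilon> \<mu> M N A \<longleftrightarrow>
     (\<forall>i<N. \<forall>k<N. i \<noteq> k \<longrightarrow> pairwise_error \<mu> M A i k \<le> \<epsilon>)"

end

theory Submission
  imports Defs "HOL-Probability.Probability" "HOL-Library.Multiset"
begin

text \<open>The upper bound is trivial: \<open>A\<close> has only \<open>M N \<le> 2 T N log N\<close> entries.
  For the lower bound, error probability \<open>\<epsilon>\<close> forces \<open>Q(\<mu> |A\<^sub>i - A\<^sub>k| / 2) \<le> \<epsilon>\<close>, so the
  columns are pairwise at distance at least \<open>\<delta> = 2 Qinv \<epsilon> / \<mu>\<close>, while they lie in a ball of
  radius \<open>\<tau> = O(\<delta>)\<close> (only the upper bound on \<open>\<tau>\<close> is needed). Rounding the columns with at most
  \<open>k\<close> nonzero entries to a grid of mesh \<open>\<delta> / sqrt (2k)\<close> is injective on such a separated family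
  and lands in the integer l1-ball of radius \<open>O(k)\<close> in \<open>\<int>\<^sup>M\<close>, which has at most
  \<open>(2M + O(k)) choose O(k)\<close> points. For \<open>k = \<gamma> log N\<close> with \<open>\<gamma>\<close> small this is at most \<open>N / 2\<close>,
  so half of the columns have more than \<open>k\<close> nonzero entries, and the l0 cost is at least
  \<open>(\<gamma> / 2) N log N\<close>.\<close>

definition gauss :: "real \<Rightarrow> real" where
  "gauss x = exp (- (x^2) / 2)"

definition gauss_tail :: "real \<Rightarrow> real" where
  "gauss_tail a = (\<integral>x. indicator {a..} x * gauss x \<partial>lborel)"

lemma gauss_eq_std_normal_density: "gauss x = sqrt (2*pi) * std_normal_density x"
  unfolding gauss_def std_normal_density_def by simp

lemma gauss_measurable [measurable]: "gauss \<in> borel_measurable borel"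
  unfolding gauss_def by measurable

lemma gauss_pos: "0 < gauss x"
  unfolding gauss_def by simp

lemma gauss_le_one: "gauss x \<le> 1"
  unfolding gauss_def by simp

lemma integrable_gauss: "integrable lborel gauss"
  unfolding gauss_eq_std_normal_density by (intro integrable_mult_right) simp

lemma integral_gauss: "(\<integral>x. gauss x \<partial>lborel) = sqrt (2*pi)"
  unfolding gauss_eq_std_normal_density by simp

lemma integrable_gauss_mult_square: "integrable lborel (\<lambda>x. gauss x * x^2)"
proof -
  have "integrable lborel (\<lambda>x. sqrt (2*pi) * (std_normal_density x * x^2))"
    using integrable_std_normal_moment[of 2] by (intro integrable_mult_right) simp
  then show ?thesis unfolding gauss_eq_std_normal_density by (simp add: mult.assoc)
qed

lemma integral_gauss_mult_square: "(\<integral>x. gauss x * x^2 \<partial>lborel) = sqrt (2*pi)"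
proof -
  have "(\<integral>x. std_normal_density x * x^(2*1) \<partial>lborel) = 1"
    using std_normal_moment_even[of 1] has_bochner_integral_integral_eq by fastforce
  then show ?thesis unfolding gauss_eq_std_normal_density by (simp add: mult.assoc)
qed

lemma integrable_indicator_gauss:
  "S \<in> sets borel \<Longrightarrow> integrable lborel (\<lambda>x. indicator S x * gauss x)"
  using integrable_mult_indicator[of S lborel gauss] integrable_gauss by simp

lemma Qfun_eq_gauss_tail: "Qfun a = gauss_tail a / sqrt (2*pi)"
  unfolding Qfun_def gauss_tail_def gauss_def set_lebesgue_integral_def by simp

lemma gauss_tail_diff:
  assumes "a \<le> b"
  shows "gauss_tail a - gauss_tail b = (\<integral>x. indicator {a..<b} x * gauss x \<partial>lborel)"
proof -
  have "\<And>x. indicator {a..} x * gauss x = indicator {a..<b} x * gauss x + indicator {b..} x * gauss x"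
    using assms by (auto simp: indicator_def)
  then show ?thesis
    unfolding gauss_tail_def by (simp add: integrable_indicator_gauss)
qed

lemma gauss_lower_on_interval:
  assumes "a \<le> x" "x \<le> b"
  shows "exp (- (a^2 + b^2) / 2) \<le> gauss x"
proof -
  have "x^2 \<le> a^2 + b^2"
  proof (cases "0 \<le> x")
    case True
    then have "x * x \<le> b * b" using assms by (intro mult_mono) auto
    then show ?thesis by (simp add: power2_eq_square add_increasing)
  next
    case False
    then have "(-x) * (-x) \<le> (-a) * (-a)" using assms by (intro mult_mono) auto
    then show ?thesis by (simp add: power2_eq_square add_increasing2)
  qed
  then show ?thesis unfolding gauss_def by simp
qed

lemma gauss_tail_diff_bounds:
  assumes "a \<le> b"
  shows "exp (- (a^2 + b^2) / 2) * (b - a) \<le> gauss_tail a - gauss_tail b"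
    and "gauss_tail a - gauss_tail b \<le> b - a"
proof -
  have ind: "integrable lborel (indicator {a..<b} :: real \<Rightarrow> real)"
    using assms by (intro integrable_real_indicator) (auto simp: emeasure_lborel_Ico)
  have meas: "measure lborel {a..<b} = b - a"
    using assms by simp
  have "(\<integral>x. indicator {a..<b} x * exp (- (a^2 + b^2) / 2) \<partial>lborel)
      \<le> (\<integral>x. indicator {a..<b} x * gauss x \<partial>lborel)"
    using gauss_lower_on_interval[of a _ b]
    by (intro integral_mono integrable_indicator_gauss integrable_mult_left ind)
       (auto simp: indicator_def)
  then show "exp (- (a^2 + b^2) / 2) * (b - a) \<le> gauss_tail a - gauss_tail b"
    using meas gauss_tail_diff[OF assms] by (simp add: mult.commute)
  have "(\<integral>x. indicator {a..<b} x * gauss x \<partial>lborel) \<le> (\<integral>x. indicator {a..<b} x \<partial>lborel)"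
    by (intro integral_mono integrable_indicator_gauss ind) (auto simp: indicator_def gauss_le_one)
  then show "gauss_tail a - gauss_tail b \<le> b - a"
    using meas gauss_tail_diff[OF assms] by simp
qed

lemma gauss_tail_strict_decreasing: "a < b \<Longrightarrow> gauss_tail b < gauss_tail a"
  using gauss_tail_diff_bounds(1)[of a b] by (smt (verit) exp_gt_zero mult_pos_pos)

lemma continuous_on_gauss_tail: "continuous_on S gauss_tail"
proof -
  have "\<bar>gauss_tail x - gauss_tail y\<bar> \<le> \<bar>x - y\<bar>" for x y
    using gauss_tail_diff_bounds[of x y] gauss_tail_diff_bounds[of y x]
    by (smt (verit) exp_gt_zero mult_nonneg_nonneg)
  then have "lipschitz_on 1 S gauss_tail"
    by (intro lipschitz_onI) (auto simp: dist_real_def)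
  then show ?thesis
    using lipschitz_on_continuous_on by blast
qed

lemma gauss_tail_zero: "gauss_tail 0 = sqrt (2*pi) / 2"
proof -
  \<comment> \<open>By symmetry of the kernel the two half-lines carry the same mass.\<close>
  have "gauss_tail 0 = \<bar>-1\<bar> *\<^sub>R (\<integral>x. indicator {0..} (0 + -1*x) * gauss (0 + -1*x) \<partial>lborel)"
    unfolding gauss_tail_def by (rule lborel_integral_real_affine) simp
  also have "\<dots> = (\<integral>x. indicator {..0} x * gauss x \<partial>lborel)"
    by (simp add: indicator_def gauss_def)
  also have "\<dots> = (\<integral>x. indicator {..<0} x * gauss x \<partial>lborel)"
    by (rule integral_cong_AE)
       (use AE_lborel_singleton[of 0] in \<open>auto elim!: eventually_mono simp: indicator_def\<close>)
  finally have left: "gauss_tail 0 = (\<integral>x. indicator {..<0} x * gauss x \<partial>lborel)" .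
  have "\<And>x. gauss x = indicator {..<0} x * gauss x + indicator {0..} x * gauss x"
    by (auto simp: indicator_def)
  then have "(\<integral>x. gauss x \<partial>lborel)
      = (\<integral>x. indicator {..<0} x * gauss x + indicator {0..} x * gauss x \<partial>lborel)"
    by presburger
  also have "\<dots> = (\<integral>x. indicator {..<0} x * gauss x \<partial>lborel) + gauss_tail 0"
    unfolding gauss_tail_def by (simp add: integrable_indicator_gauss)
  finally have "(\<integral>x. gauss x \<partial>lborel)
      = (\<integral>x. indicator {..<0} x * gauss x \<partial>lborel) + gauss_tail 0" .
  then show ?thesis
    using integral_gauss left by simp
qed

lemma gauss_tail_le_inverse_square:
  assumes "0 < a"
  shows "gauss_tail a \<le> sqrt (2*pi) / a^2"
proof -
  \<comment> \<open>Chebyshev: on \<open>[a, \<infinity>)\<close> the factor \<open>x\<^sup>2 / a\<^sup>2\<close> is at least one.\<close>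
  have "gauss_tail a \<le> (\<integral>x. gauss x * x^2 / a^2 \<partial>lborel)"
    unfolding gauss_tail_def
  proof (intro integral_mono integrable_indicator_gauss)
    show "integrable lborel (\<lambda>x. gauss x * x^2 / a^2)"
      using integrable_gauss_mult_square by simp
    fix x
    show "indicator {a..} x * gauss x \<le> gauss x * x^2 / a^2"
    proof (cases "a \<le> x")
      case True
      then have "1 \<le> x^2 / a^2"
        using assms by (simp add: power_mono)
      then have "gauss x * 1 \<le> gauss x * (x^2 / a^2)"
        using gauss_pos[of x] by (intro mult_left_mono) auto
      then show ?thesis
        using True by simp
    qed (auto simp: gauss_pos less_imp_le)
  qed auto
  also have "\<dots> = sqrt (2*pi) / a^2"
    using integral_gauss_mult_square by simp
  finally show ?thesis .
qed

lemma Qfun_strict_decreasing: "a < b \<Longrightarrow> Qfun b < Qfun a"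
  unfolding Qfun_eq_gauss_tail
  using gauss_tail_strict_decreasing by (simp add: divide_strict_right_mono)

lemma Qfun_zero: "Qfun 0 = 1/2"
  unfolding Qfun_eq_gauss_tail gauss_tail_zero by simp

lemma Qfun_le_inverse_square: "0 < a \<Longrightarrow> Qfun a \<le> 1 / a^2"
  unfolding Qfun_eq_gauss_tail
  using gauss_tail_le_inverse_square[of a] by (simp add: field_simps)

lemma continuous_on_Qfun: "continuous_on S Qfun"
  unfolding Qfun_eq_gauss_tail[abs_def] by (intro continuous_intros continuous_on_gauss_tail) simp

lemma Qinv_eqI: "Qfun q = e \<Longrightarrow> Qinv e = q"
  unfolding Qinv_def
proof (rule the_equality)
  fix a assume "Qfun q = e" "Qfun a = e"
  then show "a = q"
    using Qfun_strict_decreasing[of a q] Qfun_strict_decreasing[of q a] by (cases a q rule: linorder_cases) auto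
qed

lemma Qfun_attains:
  assumes "0 < e" "e < 1/2"
  obtains q where "0 < q" "Qfun q = e"
proof -
  define a where "a = sqrt (2/e)"
  have "0 < a" "a^2 = 2/e"
    using assms unfolding a_def by auto
  then have "Qfun a \<le> e" "e \<le> Qfun 0"
    using Qfun_le_inverse_square[of a] Qfun_zero assms by auto
  then obtain q where "0 \<le> q" "Qfun q = e"
    using IVT2'[of Qfun a e 0] \<open>0 < a\<close> continuous_on_Qfun by (metis less_eq_real_def)
  moreover have "q \<noteq> 0"
    using \<open>Qfun q = e\<close> Qfun_zero assms by auto
  ultimately show ?thesis
    using that less_eq_real_def by blast
qed

lemma Qinv_pos: "0 < e \<Longrightarrow> e < 1/2 \<Longrightarrow> 0 < Qinv e"
  by (metis Qfun_attains Qinv_eqI)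

lemma Qinv_le:
  assumes "0 < e" "e < 1/2" "Qfun x \<le> e"
  shows "Qinv e \<le> x"
proof -
  obtain q where "Qfun q = e"
    using Qfun_attains assms(1,2) by metis
  then show ?thesis
    using Qinv_eqI Qfun_strict_decreasing[of x q] assms(3) by fastforce
qed

definition int_l1_ball :: "nat \<Rightarrow> nat \<Rightarrow> (nat \<Rightarrow> int) set" where
  "int_l1_ball M L = {v. (\<forall>j\<ge>M. v j = 0) \<and> (\<Sum>j<M. \<bar>v j\<bar>) \<le> int L}"

text \<open>Stars and bars: \<open>v\<close> is written as a multiset of size \<open>L\<close> over the \<open>2M + 1\<close> letters
  \<open>Some (j, sign)\<close> (one unit of \<open>\<plusminus>v j\<close>) and \<open>None\<close> (padding).\<close>
definition l1_multiset :: "nat \<Rightarrow> nat \<Rightarrow> (nat \<Rightarrow> int) \<Rightarrow> (nat \<times> bool) option multiset" where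
  "l1_multiset M L v =
     (\<Sum>j<M. replicate_mset (nat (v j)) (Some (j, True)) + replicate_mset (nat (- v j)) (Some (j, False)))
     + replicate_mset (L - nat (\<Sum>j<M. \<bar>v j\<bar>)) None"

lemma count_l1_multiset:
  assumes "j < M"
  shows "count (l1_multiset M L v) (Some (j, True)) = nat (v j)"
    and "count (l1_multiset M L v) (Some (j, False)) = nat (- v j)"
proof -
  have "(\<Sum>a<M. count (replicate_mset (nat (v a)) (Some (a, True))
      + replicate_mset (nat (- v a)) (Some (a, False))) (Some (j, b)))
      = (\<Sum>a<M. if a = j then (if b then nat (v j) else nat (- v j)) else 0)" for b
    by (intro sum.cong) auto
  then show "count (l1_multiset M L v) (Some (j, True)) = nat (v j)"
    and "count (l1_multiset M L v) (Some (j, False)) = nat (- v j)"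
    using assms unfolding l1_multiset_def by (simp_all add: count_sum)
qed

lemma inj_on_l1_multiset: "inj_on (l1_multiset M L) (int_l1_ball M L)"
proof (rule inj_onI, rule ext)
  fix v w j
  assume v: "v \<in> int_l1_ball M L" and w: "w \<in> int_l1_ball M L"
    and eq: "l1_multiset M L v = l1_multiset M L w"
  show "v j = w j"
  proof (cases "j < M")
    case True
    then have "nat (v j) = nat (w j)" "nat (- v j) = nat (- w j)"
      using count_l1_multiset[OF True] eq by metis+
    then show ?thesis by linarith
  next
    case False
    then show ?thesis using v w unfolding int_l1_ball_def by auto
  qed
qed

lemma size_l1_multiset:
  assumes "v \<in> int_l1_ball M L"
  shows "size (l1_multiset M L v) = L"
proof -
  have "size (\<Sum>j<M. replicate_mset (nat (v j)) (Some (j, True))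
      + replicate_mset (nat (- v j)) (Some (j, False))) = (\<Sum>j<M. nat (v j) + nat (- v j))"
    (is "size ?signed = _") by simp
  also have "\<dots> = (\<Sum>j<M. nat \<bar>v j\<bar>)"
    by (intro sum.cong) auto
  also have "\<dots> = nat (\<Sum>j<M. \<bar>v j\<bar>)"
    by (metis (no_types, lifting) nat_int of_nat_sum sum.cong int_nat_eq abs_ge_zero)
  finally have "size ?signed = nat (\<Sum>j<M. \<bar>v j\<bar>)" .
  moreover have "nat (\<Sum>j<M. \<bar>v j\<bar>) \<le> L"
    using assms unfolding int_l1_ball_def by auto
  ultimately show ?thesis
    unfolding l1_multiset_def by simp
qed

lemma finite_card_int_l1_ball:
  "finite (int_l1_ball M L) \<and> card (int_l1_ball M L) \<le> (2*M + L) choose L"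
proof -
  define letters where "letters = insert None (Some ` ({..<M} \<times> (UNIV :: bool set)))"
  have "card (Some ` ({..<M} \<times> (UNIV :: bool set))) = 2*M"
    by (subst card_image) (auto simp: card_cartesian_product)
  then have card_letters: "card letters = 2*M + 1"
    unfolding letters_def by (subst card_insert_disjoint) auto
  have fin: "finite letters"
    unfolding letters_def by simp
  have into: "l1_multiset M L ` int_l1_ball M L \<subseteq> multisets_of_size letters L"
  proof
    fix X assume "X \<in> l1_multiset M L ` int_l1_ball M L"
    then obtain v where v: "v \<in> int_l1_ball M L" "X = l1_multiset M L v" by blast
    have "set_mset X \<subseteq> letters"
      unfolding v(2) l1_multiset_def letters_def by (auto simp: set_mset_sum split: if_splits)
    then show "X \<in> multisets_of_size letters L"
      using size_l1_multiset[OF v(1)] v(2) unfolding multisets_of_size_def by simp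
  qed
  have fin_ms: "finite (multisets_of_size letters L)"
    using fin by blast
  have "card (int_l1_ball M L) \<le> card (multisets_of_size letters L)"
    using card_inj_on_le[OF inj_on_l1_multiset into fin_ms] .
  also have "\<dots> = (2*M + L) choose L"
    using card_multisets_of_size[OF fin] card_letters by simp
  finally show ?thesis
    using finite_imageD[OF finite_subset[OF into fin_ms] inj_on_l1_multiset] by simp
qed

definition col_support :: "nat \<Rightarrow> (nat \<Rightarrow> nat \<Rightarrow> real) \<Rightarrow> nat \<Rightarrow> nat set" where
  "col_support M A i = {j. j < M \<and> A j i \<noteq> 0}"

definition quantize :: "nat \<Rightarrow> (nat \<Rightarrow> nat \<Rightarrow> real) \<Rightarrow> real \<Rightarrow> nat \<Rightarrow> nat \<Rightarrow> int" where
  "quantize M A h i = (\<lambda>j. if j < M then \<lfloor>A j i / h\<rfloor> else 0)"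

lemma finite_col_support [simp]: "finite (col_support M A i)"
  unfolding col_support_def by simp

lemma abs_floor_le_square: "real_of_int \<bar>\<lfloor>y\<rfloor>\<bar> \<le> y^2 / 2 + 3/2"
proof -
  have "0 \<le> (\<bar>y\<bar> - 1)^2" by simp
  then have "\<bar>y\<bar> \<le> (y^2 + 1) / 2"
    by (simp add: power2_eq_square algebra_simps)
  moreover have "real_of_int \<bar>\<lfloor>y\<rfloor>\<bar> \<le> \<bar>y\<bar> + 1" by linarith
  ultimately show ?thesis by (simp add: field_simps)
qed

lemma col_dist_less_of_quantize_eq:
  assumes h: "0 < h" and \<delta>: "0 < \<delta>" and cells: "2 * real k * h^2 \<le> \<delta>^2"
    and sp: "card (col_support M A i) \<le> k" "card (col_support M A i') \<le> k"
    and eq: "quantize M A h i = quantize M A h i'"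
  shows "col_dist M A i i' < \<delta>"
proof -
  define U where "U = col_support M A i \<union> col_support M A i'"
  have card_U: "card U \<le> 2*k"
    using card_Un_le[of "col_support M A i" "col_support M A i'"] sp unfolding U_def by linarith
  have close: "(A j i - A j i')^2 < h^2" if "j < M" for j
  proof -
    have "\<lfloor>A j i / h\<rfloor> = \<lfloor>A j i' / h\<rfloor>"
      using fun_cong[OF eq, of j] that unfolding quantize_def by simp
    then have "\<bar>A j i / h - A j i' / h\<bar> < 1"
      by linarith
    then have "\<bar>A j i - A j i'\<bar> < h"
      using h by (simp add: diff_divide_distrib[symmetric] abs_divide divide_less_eq)
    then show ?thesis
      by (metis abs_ge_zero power2_abs power_strict_mono zero_less_numeral)
  qed
  have sum_U: "(\<Sum>j<M. (A j i - A j i')^2) = (\<Sum>j\<in>U. (A j i - A j i')^2)"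
    by (rule sum.mono_neutral_right) (auto simp: U_def col_support_def)
  have "(\<Sum>j<M. (A j i - A j i')^2) < \<delta>^2"
  proof (cases "U = {}")
    case True
    then show ?thesis using sum_U \<delta> by simp
  next
    case False
    have "(\<Sum>j\<in>U. (A j i - A j i')^2) < (\<Sum>j\<in>U. h^2)"
      by (rule sum_strict_mono[OF _ False]) (auto simp: U_def col_support_def intro: close)
    also have "\<dots> \<le> real (2*k) * h^2"
      using card_U by (simp add: mult_right_mono)
    finally show ?thesis
      using sum_U cells by simp
  qed
  then show ?thesis
    unfolding col_dist_def using \<delta> by (simp add: real_sqrt_less_iff real_less_lsqrt)
qed

lemma quantize_in_int_l1_ball:
  assumes h: "0 < h" and norm: "col_norm M A i \<le> \<tau>"
    and L: "\<tau>^2 / (2*h^2) + 3/2 * real (card (col_support M A i)) \<le> real L"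
  shows "quantize M A h i \<in> int_l1_ball M L"
proof -
  let ?v = "quantize M A h i"
  have "sqrt (\<Sum>j<M. (A j i)^2) \<le> \<tau>"
    using norm unfolding col_norm_def .
  then have sum_sq: "(\<Sum>j<M. (A j i)^2) \<le> \<tau>^2"
    by (metis real_sqrt_le_iff real_sqrt_pow2 sum_nonneg zero_le_power2 power_mono real_sqrt_ge_zero)
  have entry: "real_of_int \<bar>?v j\<bar> \<le> (A j i)^2 / (2*h^2) + (if A j i \<noteq> 0 then 3/2 else 0)"
    if "j < M" for j
    using that abs_floor_le_square[of "A j i / h"]
    by (simp add: quantize_def power_divide)
  have "real_of_int (\<Sum>j<M. \<bar>?v j\<bar>)
      \<le> (\<Sum>j<M. (A j i)^2 / (2*h^2) + (if A j i \<noteq> 0 then 3/2 else 0))"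
    unfolding of_int_sum by (intro sum_mono entry) simp
  also have "\<dots> = (\<Sum>j<M. (A j i)^2) / (2*h^2) + 3/2 * real (card (col_support M A i))"
    by (simp add: sum.distrib sum_divide_distrib sum.If_cases col_support_def Int_def conj_commute)
  also have "\<dots> \<le> real L"
    using sum_sq h L by (smt (verit) divide_right_mono zero_le_power2)
  finally have "(\<Sum>j<M. \<bar>?v j\<bar>) \<le> int L"
    by linarith
  then show ?thesis
    unfolding int_l1_ball_def by (simp add: quantize_def)
qed

lemma card_sparse_separated_le:
  fixes \<delta> \<tau> \<rho> :: real and S :: "nat set"
  assumes \<delta>: "0 < \<delta>" and k: "1 \<le> k" and \<tau>: "\<tau> \<le> \<rho> * \<delta>" and \<beta>: "\<rho>^2 + 3/2 \<le> real \<beta>"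
    and norm: "\<forall>i\<in>S. col_norm M A i \<le> \<tau>"
    and sep: "\<forall>i\<in>S. \<forall>i'\<in>S. i \<noteq> i' \<longrightarrow> \<delta> \<le> col_dist M A i i'"
    and sparse: "\<forall>i\<in>S. card (col_support M A i) \<le> k"
  shows "card S \<le> (2*M + \<beta>*k) choose (\<beta>*k)"
proof (cases "S = {}")
  case False
  then obtain i0 where "i0 \<in> S" by blast
  then have \<tau>0: "0 \<le> \<tau>"
    using norm order_trans[of 0 "col_norm M A i0" \<tau>] unfolding col_norm_def by (simp add: sum_nonneg)
  define h where "h = \<delta> / sqrt (2 * real k)"
  have h: "0 < h" "2 * real k * h^2 = \<delta>^2"
    using \<delta> k unfolding h_def by (auto simp: power_divide)
  have inj: "inj_on (quantize M A h) S"
    using col_dist_less_of_quantize_eq[OF h(1) \<delta> eq_refl[OF h(2)]] sep sparse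
    by (meson inj_onI not_le)
  have "\<tau>^2 / (2*h^2) \<le> \<rho>^2 * real k"
  proof -
    have "\<tau>^2 \<le> (\<rho> * \<delta>)^2"
      using \<tau> \<tau>0 by (intro power_mono) auto
    also have "\<dots> = \<rho>^2 * real k * (2*h^2)"
      using h(2) by (simp add: power_mult_distrib)
    finally show ?thesis
      using h(1) by (simp add: divide_le_eq)
  qed
  then have "\<tau>^2 / (2*h^2) + 3/2 * real (card (col_support M A i)) \<le> (\<rho>^2 + 3/2) * real k"
    if "i \<in> S" for i
  proof -
    have "real (card (col_support M A i)) \<le> real k"
      using sparse that by simp
    then show ?thesis
      using \<open>\<tau>^2 / (2*h^2) \<le> \<rho>^2 * real k\<close> by (simp add: algebra_simps)
  qed
  also have "\<dots> \<le> real (\<beta>*k)"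
    using \<beta> by (simp add: mult_right_mono)
  finally have "quantize M A h i \<in> int_l1_ball M (\<beta>*k)" if "i \<in> S" for i
    using that norm by (intro quantize_in_int_l1_ball[OF h(1), where \<tau> = \<tau>]) auto
  then have "card S \<le> card (int_l1_ball M (\<beta>*k))"
    using finite_card_int_l1_ball card_inj_on_le[OF inj] by blast
  then show ?thesis
    using finite_card_int_l1_ball le_trans by blast
qed simp

lemma l0_cost_eq_sum_card_col_support:
  "l0_cost M N A = (\<Sum>i<N. card (col_support M A i))"
proof -
  have "{(j, i). j < M \<and> i < N \<and> A j i \<noteq> 0} = (\<Union>i<N. (\<lambda>j. (j, i)) ` col_support M A i)"
    unfolding col_support_def by auto
  then have "l0_cost M N A = card (\<Union>i<N. (\<lambda>j. (j, i)) ` col_support M A i)"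
    unfolding l0_cost_def by simp
  also have "\<dots> = (\<Sum>i<N. card (col_support M A i))"
    by (subst card_UN_disjoint) (auto simp: card_image inj_on_def)
  finally show ?thesis .
qed

lemma l0_cost_le: "l0_cost M N A \<le> M * N"
proof -
  have "(\<Sum>i<N. card (col_support M A i)) \<le> (\<Sum>i<N. M)"
    by (intro sum_mono) (auto simp: col_support_def intro: card_mono[of "{..<M}", simplified])
  then show ?thesis
    by (simp add: l0_cost_eq_sum_card_col_support mult.commute)
qed

lemma l0_cost_ge_heavy_columns:
  "card {i. i < N \<and> k < card (col_support M A i)} * Suc k \<le> l0_cost M N A"
proof -
  let ?H = "{i. i < N \<and> k < card (col_support M A i)}"
  have "card ?H * Suc k = (\<Sum>i\<in>?H. Suc k)" by simp
  also have "\<dots> \<le> (\<Sum>i\<in>?H. card (col_support M A i))"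
    by (intro sum_mono) auto
  also have "\<dots> \<le> (\<Sum>i<N. card (col_support M A i))"
    by (intro sum_mono2) auto
  finally show ?thesis
    by (simp add: l0_cost_eq_sum_card_col_support)
qed

lemma l0_cost_ge_of_few_light_columns:
  assumes "real (card {i. i < N \<and> card (col_support M A i) \<le> k}) \<le> real N / 2"
  shows "real N / 2 * (real k + 1) \<le> real (l0_cost M N A)"
proof -
  let ?light = "{i. i < N \<and> card (col_support M A i) \<le> k}"
  let ?heavy = "{i. i < N \<and> k < card (col_support M A i)}"
  have "card ?light + card ?heavy = card (?light \<union> ?heavy)"
    by (intro card_Un_disjoint[symmetric]) auto
  also have "?light \<union> ?heavy = {..<N}"
    by auto
  finally have "real N / 2 \<le> real (card ?heavy)"
    using assms by simp
  then have "real N / 2 * (real k + 1) \<le> real (card ?heavy) * (real k + 1)"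
    by (intro mult_right_mono) auto
  also have "\<dots> = real (card ?heavy * Suc k)"
    by (simp add: algebra_simps)
  also have "\<dots> \<le> real (l0_cost M N A)"
    using l0_cost_ge_heavy_columns by (simp only: of_nat_le_iff)
  finally show ?thesis .
qed

lemma pow_div_fact_le_exp: "real s ^ s / fact s \<le> exp (real s)"
proof -
  have sums: "(\<lambda>m. real s ^ m /\<^sub>R fact m) sums exp (real s)"
    by (rule exp_converges)
  have "(\<Sum>m\<in>{s}. real s ^ m /\<^sub>R fact m) \<le> (\<Sum>m. real s ^ m /\<^sub>R fact m)"
    by (rule sum_le_suminf) (use sums sums_summable in auto)
  then show ?thesis
    using sums_unique[OF sums] by (simp add: divide_inverse mult.commute)
qed

lemma binomial_le_exp_ratio_pow:
  assumes "1 \<le> s"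
  shows "real (n choose s) \<le> (exp 1 * real n / real s) ^ s"
proof -
  have "real (n choose s) * fact s \<le> real n ^ s"
    using binomial_fact_pow[of n s] by (metis of_nat_fact of_nat_le_iff of_nat_mult of_nat_power)
  moreover have "real s ^ s \<le> exp (real s) * fact s"
    using pow_div_fact_le_exp[of s] by (simp add: divide_le_eq)
  ultimately have "real (n choose s) * real s ^ s \<le> exp (real s) * real n ^ s"
  proof -
    assume choose: "real (n choose s) * fact s \<le> real n ^ s"
      and pow: "real s ^ s \<le> exp (real s) * fact s"
    have "real (n choose s) * real s ^ s \<le> real (n choose s) * (exp (real s) * fact s)"
      using pow by (intro mult_left_mono) auto
    also have "\<dots> = exp (real s) * (real (n choose s) * fact s)"
      by (simp add: algebra_simps)
    also have "\<dots> \<le> exp (real s) * real n ^ s"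
      using choose by (intro mult_left_mono) auto
    finally show ?thesis .
  qed
  then have "real (n choose s) \<le> exp (real s) * real n ^ s / real s ^ s"
    using assms by (simp add: le_divide_eq)
  also have "\<dots> = (exp 1 * real n / real s) ^ s"
    by (simp add: power_divide power_mult_distrib exp_of_nat_mult[symmetric])
  finally show ?thesis .
qed

lemma mult_one_plus_ln_le:
  fixes x a :: real
  assumes "0 < x" "0 \<le> a"
  shows "x * (1 + ln (1 + a/x)) \<le> 2 * sqrt (x * (x + a))"
proof -
  have y: "0 < 1 + a/x"
    using assms by (simp add: add_pos_nonneg)
  have "ln (1 + a/x) = 2 * ln (sqrt (1 + a/x))"
    using y by (simp add: ln_sqrt)
  also have "\<dots> \<le> 2 * (sqrt (1 + a/x) - 1)"
    using y by (intro mult_left_mono ln_le_minus_one) auto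
  finally have "x * (1 + ln (1 + a/x)) \<le> x * (2 * sqrt (1 + a/x))"
    using assms(1) by (intro mult_left_mono) auto
  also have "x * (2 * sqrt (1 + a/x)) = 2 * sqrt (x^2 * (1 + a/x))"
    using assms(1) by (simp add: real_sqrt_mult)
  also have "x^2 * (1 + a/x) = x * (x + a)"
    using assms(1) by (simp add: field_simps power2_eq_square)
  finally show ?thesis .
qed

lemma scaled_entropy_le:
  fixes x a l :: real
  assumes "0 < x" "0 \<le> a" "x * (x + a) \<le> 1/400" "2 \<le> l"
  shows "x * l * (1 + ln (1 + a/x)) \<le> (l - 1) * ln 2"
proof -
  have "x * (1 + ln (1 + a/x)) \<le> 2 * sqrt (1/400)"
    using mult_one_plus_ln_le[OF assms(1,2)] real_sqrt_le_mono[OF assms(3)] by linarith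
  then have "x * l * (1 + ln (1 + a/x)) \<le> l * (2 * sqrt (1/400))"
    using assms(4) by (simp add: mult.commute mult.left_commute mult_left_mono)
  also have "\<dots> = l / 10"
    by (simp add: real_sqrt_divide)
  also have "\<dots> \<le> (l - 1) * (2/3)"
    using assms(4) by simp
  also have "\<dots> \<le> (l - 1) * ln 2"
    using ln2_ge_two_thirds assms(4) by (intro mult_left_mono) auto
  finally show ?thesis .
qed

lemma binomial_le_half:
  fixes T :: real and M L N :: nat
  defines "x \<equiv> 1 / (400 * (1 + 8*T))"
  assumes T: "1 \<le> T" and ll: "2 \<le> log 2 N" and M: "real M \<le> 2 * T * log 2 N"
    and L: "x * log 2 N / 2 \<le> real L" "real L \<le> x * log 2 N"
  shows "real ((2*M + L) choose L) \<le> real N / 2"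
proof -
  define ll where "ll = log 2 N"
  have x: "0 < x" "x \<le> 1" "x * (1 + 8*T) = 1/400"
    using T unfolding x_def by (auto simp: field_simps)
  then have x_sq: "x * (x + 8*T) \<le> 1/400"
    by (metis add_le_cancel_right mult_left_mono less_imp_le)
  have N: "0 < real N"
    using ll by (cases "N = 0") (auto simp: log_def)
  have "0 < x * log 2 N / 2"
    using x ll by simp
  then have L0: "0 < real L"
    using L(1) by linarith
  define ratio where "ratio = real (2*M + L) / real L"
  have ratio: "1 \<le> ratio" "ratio \<le> 1 + 8*T/x"
  proof -
    have ratio_eq: "ratio = 1 + 2 * real M / real L"
      using L0 unfolding ratio_def by (simp add: field_simps)
    have "2 * real M / real L \<le> (4 * T * ll) / (x * ll / 2)"
      using M L L0 x ll T unfolding ll_def by (intro frac_le) auto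
    also have "\<dots> = 8*T/x"
      using ll x unfolding ll_def by (simp add: field_simps)
    finally show "1 \<le> ratio" "ratio \<le> 1 + 8*T/x"
      unfolding ratio_eq by simp_all
  qed
  have "1 + ln ratio \<le> 1 + ln (1 + 8*T/x)"
    using ratio by (simp add: ln_mono)
  then have "real L * (1 + ln ratio) \<le> x * ll * (1 + ln (1 + 8*T/x))"
    using L(2) ratio(1) unfolding ll_def by (intro mult_mono) auto
  also have "\<dots> \<le> (ll - 1) * ln 2"
    using scaled_entropy_le[OF x(1) _ x_sq] T ll unfolding ll_def by simp
  also have "\<dots> = ln (real N / 2)"
    using N unfolding ll_def by (simp add: ln_div log_def algebra_simps)
  finally have exponent: "real L * ln (exp 1 * ratio) \<le> ln (real N / 2)"
    using ratio by (simp add: ln_mult)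
  have "real ((2*M + L) choose L) \<le> (exp 1 * ratio) ^ L"
    using binomial_le_exp_ratio_pow[of L "2*M + L"] L0 unfolding ratio_def by (simp add: mult.assoc)
  also have "\<dots> = exp (real L * ln (exp 1 * ratio))"
    using ratio by (subst ln_realpow[symmetric]) auto
  also have "\<dots> \<le> exp (ln (real N / 2))"
    using exponent by simp
  also have "\<dots> = real N / 2"
    using N by simp
  finally show ?thesis .
qed

lemma col_dist_ge_of_achieves_error:
  assumes "achieves_error \<epsilon> \<mu> M N A" "0 < \<epsilon>" "\<epsilon> < 1/2" "0 < \<mu>"
    and "i < N" "i' < N" "i \<noteq> i'"
  shows "2 * Qinv \<epsilon> / \<mu> \<le> col_dist M A i i'"
proof -
  have "Qfun (\<mu> * col_dist M A i i' / 2) \<le> \<epsilon>"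
    using assms unfolding achieves_error_def pairwise_error_def by blast
  then have "Qinv \<epsilon> \<le> \<mu> * col_dist M A i i' / 2"
    using Qinv_le[OF assms(2,3)] by blast
  then show ?thesis
    using assms(4) by (simp add: field_simps)
qed

lemma l0_cost_lower_bound:
  fixes T \<rho> \<delta> :: real and \<beta> M N :: nat
  defines "\<gamma> \<equiv> 1 / (400 * (1 + 8*T) * real \<beta>)"
  assumes T: "1 \<le> T" and \<beta>: "\<rho>^2 + 3/2 \<le> real \<beta>" and \<delta>: "0 < \<delta>"
    and ll: "2 + 2/\<gamma> \<le> log 2 N" and M: "real M \<le> 2 * T * log 2 N"
    and norm: "\<forall>i<N. col_norm M A i \<le> \<rho> * \<delta>"
    and sep: "\<forall>i<N. \<forall>i'<N. i \<noteq> i' \<longrightarrow> \<delta> \<le> col_dist M A i i'"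
  shows "\<gamma> / 2 * real N * log 2 N \<le> real (l0_cost M N A)"
proof -
  define x where "x = 1 / (400 * (1 + 8*T))"
  define ll where "ll = log 2 N"
  have "0 < real \<beta>"
    using \<beta> zero_le_power2[of \<rho>] by linarith
  then have \<gamma>: "0 < \<gamma>" "real \<beta> * \<gamma> = x"
    using T unfolding \<gamma>_def x_def by (simp_all add: add_pos_nonneg)
  have "\<gamma> * (2 + 2/\<gamma>) \<le> \<gamma> * ll"
    using ll \<gamma> unfolding ll_def by (intro mult_left_mono) auto
  then have \<gamma>ll: "2 \<le> \<gamma> * ll"
    using \<gamma>(1) by (simp add: distrib_left)
  have ll2: "2 \<le> ll"
    using ll \<gamma>(1) divide_pos_pos[of 2 \<gamma>] unfolding ll_def by linarith
  define k where "k = nat \<lfloor>\<gamma> * ll\<rfloor>"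
  have k: "1 \<le> k" "real k \<le> \<gamma> * ll" "\<gamma> * ll \<le> real k + 1"
    unfolding k_def using \<gamma>ll by linarith+
  have "real \<beta> * (\<gamma> * ll / 2) \<le> real \<beta> * real k" "real \<beta> * real k \<le> real \<beta> * (\<gamma> * ll)"
    using k \<gamma>ll by (intro mult_left_mono; simp)+
  then have L: "x * ll / 2 \<le> real (\<beta> * k)" "real (\<beta> * k) \<le> x * ll"
    unfolding \<gamma>(2)[symmetric] by (simp_all add: mult.assoc)
  have "card {i. i < N \<and> card (col_support M A i) \<le> k} \<le> (2*M + \<beta>*k) choose (\<beta>*k)"
    using norm sep by (intro card_sparse_separated_le[OF \<delta> k(1) order_refl \<beta>]) auto
  moreover have "real ((2*M + \<beta>*k) choose (\<beta>*k)) \<le> real N / 2"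
    using binomial_le_half[OF T _ M] ll2 L unfolding ll_def x_def by blast
  ultimately have "real N / 2 * (real k + 1) \<le> real (l0_cost M N A)"
    by (intro l0_cost_ge_of_few_light_columns) linarith
  moreover have "real N / 2 * (\<gamma> * ll) \<le> real N / 2 * (real k + 1)"
    using k by (intro mult_left_mono) auto
  ultimately show ?thesis
    unfolding ll_def by (simp add: algebra_simps)
qed

lemma l0_cost_bounds:
  fixes T \<rho> \<delta> :: real and \<beta> N :: nat
  defines "\<gamma> \<equiv> 1 / (400 * (1 + 8*T) * real \<beta>)" and "M \<equiv> nat \<lceil>T * log 2 N\<rceil>"
  assumes T: "1 \<le> T" and \<beta>: "\<rho>^2 + 3/2 \<le> real \<beta>" and \<delta>: "0 < \<delta>"
    and N: "2 powr (2 + 2/\<gamma>) \<le> real N"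
    and norm: "\<forall>i<N. col_norm M A i \<le> \<rho> * \<delta>"
    and sep: "\<forall>i<N. \<forall>i'<N. i \<noteq> i' \<longrightarrow> \<delta> \<le> col_dist M A i i'"
  shows "\<gamma> / 2 * real N * log 2 N \<le> real (l0_cost M N A)"
    and "real (l0_cost M N A) \<le> 2 * T * real N * log 2 N"
proof -
  have "0 < real \<beta>"
    using \<beta> zero_le_power2[of \<rho>] by linarith
  then have "0 < 2 / \<gamma>"
    using T unfolding \<gamma>_def by (simp add: add_pos_nonneg)
  moreover have "0 < real N"
    using N powr_gt_zero[of 2 "2 + 2/\<gamma>"] by linarith
  ultimately have ll: "2 + 2/\<gamma> \<le> log 2 N"
    using N by (simp add: le_log_iff)
  then have "2 \<le> log 2 N"
    using \<open>0 < 2 / \<gamma>\<close> by linarith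
  then have "1 * 2 \<le> T * log 2 N"
    using T by (intro mult_mono) auto
  then have M_le: "real M \<le> 2 * T * log 2 N"
    unfolding M_def by linarith
  show "\<gamma> / 2 * real N * log 2 N \<le> real (l0_cost M N A)"
    using l0_cost_lower_bound[OF T \<beta> \<delta> ll(1)[unfolded \<gamma>_def] M_le norm sep] unfolding \<gamma>_def .
  have "real (l0_cost M N A) \<le> real M * real N"
    using l0_cost_le[of M N A] by (simp only: of_nat_le_iff of_nat_mult[symmetric])
  also have "\<dots> \<le> 2 * T * log 2 N * real N"
    using M_le by (intro mult_right_mono) auto
  finally show "real (l0_cost M N A) \<le> 2 * T * real N * log 2 N"
    by (simp add: algebra_simps)
qed

theorem theorem2:
  fixes T c1 c2 \<epsilon> \<mu> :: real
  assumes "T \<ge> 1" and "0 < c1" and "c1 \<le> c2"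
    and "0 < \<epsilon>" and "\<epsilon> < 1/2" and "0 < \<mu>"
  shows "\<exists>C1 C2 N0. 0 < C1 \<and> 0 < C2 \<and>
    (\<forall>N::nat \<ge> N0. \<forall>(\<tau>::real) (A::nat \<Rightarrow> nat \<Rightarrow> real).
       (let M = nat \<lceil>T * log 2 (real N)\<rceil> in
         c1 * Qinv \<epsilon> / \<mu> \<le> \<tau> \<and> \<tau> \<le> c2 * Qinv \<epsilon> / \<mu> \<and>
         (\<forall>i<N. col_norm M A i \<le> \<tau>) \<and> achieves_error \<epsilon> \<mu> M N A
         \<longrightarrow> C1 * real N * log 2 (real N) \<le> real (l0_cost M N A) \<and>
             real (l0_cost M N A) \<le> C2 * real N * log 2 (real N)))"
proof -
  define \<rho> where "\<rho> = c2 / 2"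
  define \<beta> :: nat where "\<beta> = nat \<lceil>\<rho>^2\<rceil> + 2"
  define \<gamma> where "\<gamma> = 1 / (400 * (1 + 8*T) * real \<beta>)"
  define \<delta> where "\<delta> = 2 * Qinv \<epsilon> / \<mu>"
  have \<beta>: "\<rho>^2 + 3/2 \<le> real \<beta>"
    unfolding \<beta>_def by linarith
  then have "0 < real \<beta>"
    using zero_le_power2[of \<rho>] by linarith
  then have \<gamma>: "0 < \<gamma>"
    using assms(1) unfolding \<gamma>_def by (simp add: add_pos_nonneg)
  have \<delta>: "0 < \<delta>"
    using Qinv_pos[OF assms(4,5)] assms(6) unfolding \<delta>_def by simp
  have "\<gamma>/2 * real N * log 2 N \<le> real (l0_cost M N A) \<and> real (l0_cost M N A) \<le> 2*T * real N * log 2 N"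
    if "nat \<lceil>2 powr (2 + 2/\<gamma>)\<rceil> \<le> N" and M: "M = nat \<lceil>T * log 2 N\<rceil>"
      and "\<tau> \<le> c2 * Qinv \<epsilon> / \<mu>" "\<forall>i<N. col_norm M A i \<le> \<tau>" "achieves_error \<epsilon> \<mu> M N A"
    for N M \<tau> A
  proof -
    have "2 powr (2 + 2/\<gamma>) \<le> real N"
      using that(1) by linarith
    moreover have "\<forall>i<N. col_norm M A i \<le> \<rho> * \<delta>"
      using that(3,4) unfolding \<rho>_def \<delta>_def by force
    moreover have "\<forall>i<N. \<forall>i'<N. i \<noteq> i' \<longrightarrow> \<delta> \<le> col_dist M A i i'"
      using col_dist_ge_of_achieves_error[OF that(5) assms(4,5,6)] unfolding \<delta>_def by blast
    ultimately show ?thesis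
      using l0_cost_bounds[OF assms(1) \<beta> \<delta>, of N A] unfolding M \<gamma>_def[symmetric] by (intro conjI)
  qed
  then show ?thesis
    using \<gamma> assms(1) unfolding Let_def
    by (intro exI[of _ "\<gamma>/2"] exI[of _ "2*T"] exI[of _ "nat \<lceil>2 powr (2 + 2/\<gamma>)\<rceil>"]) auto
qed

end
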